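(* Let $\omega>0$ and, for $\tau>0$, set $\sigma=\omega\sqrt\tau$. Let $w:\mathbb{R}\to\mathbb{R}$ be continuous with $0<L\le w(x)\le U$ for all $x\in\mathbb{R}$ for some constants $L,U$, and let $w$ be twice differentiable on $\mathbb{R}$ with $|w''(x)|<M$ for some $M$ and all $x\in\mathbb{R}$. Define, for $x_1,x_2\in\mathbb{R}$ and $\tau>0$, $$v(x_1,x_2;\tau)=\frac{\int_{\mathbb{R}}k_{\sqrt2\sigma}(y;x_2)\,w(y)\,\mathrm{d}y}{\int_{\mathbb{R}}k_{\sigma}(y;x_2)\,w(y)\,\mathrm{d}y}\int_{\mathbb{R}}k_{\sigma/\sqrt2}\Bigl(z;\tfrac12(x_1+x_2)\Bigr)\frac{w(z)}{\int_{\mathbb{R}}k_\sigma(y;z)\,w(y)\,\mathrm{d}y}\,\mathrm{d}z,$$ where $k_s(\cdot;x)$ denotes the Gaussian density with mean $x$ and standard deviation $s$. Let $\tau_0=\frac{2L}{M\omega^2}$. Then there is a constant $C>0$ such that $|v(x_1,x_2;\tau)-1|\le C\tau$ for all $x_1,x_2\in\mathbb{R}$ and all $\tau\in(0,\tau_0)$.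
   Context: The function $v$ is the ratio of the two-step transition density of a one-dimensional random walk with Gaussian kernel of standard deviation $\sigma$ and weighting function $w$ to the one-step density of the same model with standard deviation $\sqrt2\sigma$. *)

theory Defs
  imports "HOL-Probability.Probability"
begin

definition gauss_k :: "real \<Rightarrow> real \<Rightarrow> real \<Rightarrow> real" where
  "gauss_k s y x = normal_density x s y"

definition smooth_w :: "(real \<Rightarrow> real) \<Rightarrow> real \<Rightarrow> real \<Rightarrow> real" where
  "smooth_w w s x = (\<integral>y. gauss_k s y x * w y \<partial>lborel)"

definition v_ratio :: "real \<Rightarrow> (real \<Rightarrow> real) \<Rightarrow> real \<Rightarrow> real \<Rightarrow> real \<Rightarrow> real" where
  "v_ratio \<omega> w x1 x2 \<tau> =
     (let \<sigma> = \<omega> * sqrt \<tau> in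
      smooth_w w (sqrt 2 * \<sigma>) x2 / smooth_w w \<sigma> x2 *
      (\<integral>z. gauss_k (\<sigma> / sqrt 2) z ((x1 + x2) / 2) * w z / smooth_w w \<sigma> z \<partial>lborel))"

end

theory Submission
  imports Defs
begin

text \<open>
  Smoothing a function with bounded second derivative by a centred Gaussian of standard deviation
  \<open>s\<close> moves it by at most \<open>M s\<^sup>2 / 2\<close>: the zeroth and first order Taylor terms integrate to
  \<open>w x\<close> and \<open>0\<close>, and the remainder is controlled by the second moment \<open>s\<^sup>2\<close>.
  With \<open>\<sigma>\<^sup>2 = \<omega>\<^sup>2 \<tau>\<close> and \<open>w \<ge> L\<close>, both the prefactor of \<open>v\<close> and the integrand
  \<open>w z / (k\<^sub>\<sigma> * w)(z)\<close> are therefore \<open>1 + O(\<tau>)\<close> uniformly, and averaging the latter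
  against a probability density keeps it \<open>1 + O(\<tau>)\<close>. The restriction \<open>\<tau> < \<tau>\<^sub>0\<close> says
  exactly that \<open>M \<sigma>\<^sup>2 / (2 L) < 1\<close>, which keeps the averaged factor bounded when the two
  factors are multiplied.
\<close>

lemma abs_taylor2_remainder_le:
  fixes f f' f'' :: "real \<Rightarrow> real"
  assumes d1: "\<And>x. (f has_real_derivative f' x) (at x)"
    and d2: "\<And>x. (f' has_real_derivative f'' x) (at x)"
    and bound: "\<And>x. \<bar>f'' x\<bar> \<le> M"
  shows "\<bar>f y - f x - f' x * (y - x)\<bar> \<le> M / 2 * (y - x)\<^sup>2"
proof (cases "y = x")
  case True
  then show ?thesis by simp
next
  case False
  define diff where "diff = (\<lambda>m::nat. if m = 0 then f else if m = 1 then f' else f'')"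
  have "\<exists>t. (if y < x then y < t \<and> t < x else x < t \<and> t < y) \<and>
      f y = (\<Sum>m<2. diff m x / fact m * (y - x) ^ m) + diff 2 t / fact 2 * (y - x)\<^sup>2"
    by (rule Taylor[where a = "min x y" and b = "max x y"])
       (use False d1 d2 in \<open>auto simp: diff_def less_2_cases_iff\<close>)
  then obtain t where "f y = (\<Sum>m<2. diff m x / fact m * (y - x) ^ m) + diff 2 t / fact 2 * (y - x)\<^sup>2"
    by blast
  then have "f y - f x - f' x * (y - x) = f'' t / 2 * (y - x)\<^sup>2"
    by (simp add: diff_def numeral_2_eq_2)
  also have "\<bar>\<dots>\<bar> \<le> M / 2 * (y - x)\<^sup>2"
    using bound[of t] by (simp add: abs_mult mult_right_mono)
  finally show ?thesis .
qed

lemma borel_measurable_has_real_derivative: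
  fixes f f' :: "real \<Rightarrow> real"
  assumes "\<And>x. (f has_real_derivative f' x) (at x)"
  shows "f \<in> borel_measurable borel"
  using assms
  by (intro borel_measurable_continuous_onI DERIV_continuous_on)
     (auto intro: has_field_derivative_at_within)

lemma integrable_normal_density_mult_bounded:
  fixes f :: "real \<Rightarrow> real"
  assumes "0 < s" and [measurable]: "f \<in> borel_measurable borel" and bound: "\<And>y. \<bar>f y\<bar> \<le> B"
  shows "integrable lborel (\<lambda>y. normal_density \<mu> s y * f y)"
proof (rule Bochner_Integration.integrable_bound)
  show "integrable lborel (\<lambda>y. normal_density \<mu> s y * B)"
    using \<open>0 < s\<close> by simp
  show "AE y in lborel. norm (normal_density \<mu> s y * f y) \<le> norm (normal_density \<mu> s y * B)"
  proof (intro AE_I2)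
    fix y
    have "\<bar>f y\<bar> \<le> \<bar>B\<bar>"
      using bound[of y] by linarith
    then show "norm (normal_density \<mu> s y * f y) \<le> norm (normal_density \<mu> s y * B)"
      by (simp add: abs_mult mult_left_mono)
  qed
qed measurable

lemma abs_integral_normal_density_mult_sub_le:
  fixes f :: "real \<Rightarrow> real"
  assumes "0 < s" and [measurable]: "f \<in> borel_measurable borel" and dev: "\<And>y. \<bar>f y - c\<bar> \<le> e"
  shows "\<bar>(\<integral>y. normal_density \<mu> s y * f y \<partial>lborel) - c\<bar> \<le> e"
proof -
  let ?k = "normal_density \<mu> s"
  have "\<bar>f y\<bar> \<le> \<bar>c\<bar> + e" for y
    using dev[of y] abs_triangle_ineq[of c "f y - c"] by simp
  then have int_f: "integrable lborel (\<lambda>y. ?k y * f y)"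
    using \<open>0 < s\<close> by (rule integrable_normal_density_mult_bounded[rotated 2]) simp
  have int_c: "integrable lborel (\<lambda>y. ?k y * c)"
    using \<open>0 < s\<close> by simp
  have "(\<integral>y. ?k y * f y \<partial>lborel) - c = (\<integral>y. ?k y * f y - ?k y * c \<partial>lborel)"
    using \<open>0 < s\<close> by (simp add: Bochner_Integration.integral_diff[OF int_f int_c])
  also have "\<bar>\<dots>\<bar> \<le> (\<integral>y. ?k y * e \<partial>lborel)"
  proof (rule integral_abs_bound_integral)
    show "integrable lborel (\<lambda>y. ?k y * f y - ?k y * c)"
      using int_f int_c by simp
    show "integrable lborel (\<lambda>y. ?k y * e)"
      using \<open>0 < s\<close> by simp
    show "\<bar>?k y * f y - ?k y * c\<bar> \<le> ?k y * e" for y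
      using dev[of y] by (simp add: right_diff_distrib[symmetric] abs_mult mult_left_mono)
  qed
  also have "\<dots> = e"
    using \<open>0 < s\<close> by simp
  finally show ?thesis .
qed

lemma borel_measurable_smooth_w[measurable]:
  assumes [measurable]: "w \<in> borel_measurable borel"
  shows "smooth_w w s \<in> borel_measurable borel"
  unfolding smooth_w_def gauss_k_def
  by (rule lborel.borel_measurable_lebesgue_integral) (unfold normal_density_def, measurable)

lemma smooth_w_ge:
  assumes "0 < s" and [measurable]: "w \<in> borel_measurable borel"
    and lower: "\<And>y. L \<le> w y" and upper: "\<And>y. w y \<le> U"
  shows "L \<le> smooth_w w s x"
proof -
  have "\<bar>w y\<bar> \<le> \<bar>L\<bar> + \<bar>U\<bar>" for y
    using lower[of y] upper[of y] by linarith
  then have "integrable lborel (\<lambda>y. normal_density x s y * w y)"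
    by (rule integrable_normal_density_mult_bounded[OF \<open>0 < s\<close>, rotated]) simp
  then have "(\<integral>y. normal_density x s y * L \<partial>lborel) \<le> smooth_w w s x"
    unfolding smooth_w_def gauss_k_def
    using \<open>0 < s\<close> lower by (intro integral_mono) (simp_all add: mult_left_mono)
  then show ?thesis
    using \<open>0 < s\<close> by simp
qed

lemma abs_smooth_w_sub_le:
  fixes w w' w'' :: "real \<Rightarrow> real"
  assumes "0 < s" and bounded: "\<And>y. \<bar>w y\<bar> \<le> B"
    and d1: "\<And>x. (w has_real_derivative w' x) (at x)"
    and d2: "\<And>x. (w' has_real_derivative w'' x) (at x)"
    and curv: "\<And>x. \<bar>w'' x\<bar> \<le> M"
  shows "\<bar>smooth_w w s x - w x\<bar> \<le> M / 2 * s\<^sup>2"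
proof -
  let ?k = "normal_density x s"
  define R where "R y = w y - w x - w' x * (y - x)" for y
  have [measurable]: "w \<in> borel_measurable borel"
    using d1 by (rule borel_measurable_has_real_derivative)
  have "has_bochner_integral lborel (\<lambda>y. ?k y * w y) (smooth_w w s x)"
    unfolding smooth_w_def gauss_k_def
    using integrable_normal_density_mult_bounded[OF \<open>0 < s\<close> _ bounded]
    by (simp add: has_bochner_integral_iff)
  moreover have "has_bochner_integral lborel ?k 1"
    using \<open>0 < s\<close> by (simp add: has_bochner_integral_iff)
  moreover have "has_bochner_integral lborel (\<lambda>y. ?k y * (y - x)) 0"
    using normal_moment_odd[OF \<open>0 < s\<close>, of x 0] by simp
  ultimately have "has_bochner_integral lborel
      (\<lambda>y. ?k y * w y - w x * ?k y - w' x * (?k y * (y - x))) (smooth_w w s x - w x * 1 - w' x * 0)"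
    by (intro has_bochner_integral_diff has_bochner_integral_mult_right)
  moreover have "(\<lambda>y. ?k y * w y - w x * ?k y - w' x * (?k y * (y - x))) = (\<lambda>y. ?k y * R y)"
    by (auto simp: R_def algebra_simps)
  ultimately have R_integral: "has_bochner_integral lborel (\<lambda>y. ?k y * R y) (smooth_w w s x - w x)"
    by simp
  then have "\<bar>smooth_w w s x - w x\<bar> = \<bar>\<integral>y. ?k y * R y \<partial>lborel\<bar>"
    by (simp add: has_bochner_integral_integral_eq)
  also have "\<dots> \<le> (\<integral>y. M / 2 * (?k y * (y - x)\<^sup>2) \<partial>lborel)"
  proof (rule integral_abs_bound_integral)
    show "integrable lborel (\<lambda>y. ?k y * R y)"
      using R_integral by (rule integrable.intros)
    show "integrable lborel (\<lambda>y. M / 2 * (?k y * (y - x)\<^sup>2))"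
      using integrable_normal_moment[OF \<open>0 < s\<close>, of x 2] by simp
    show "\<bar>?k y * R y\<bar> \<le> M / 2 * (?k y * (y - x)\<^sup>2)" for y
    proof -
      have "\<bar>?k y * R y\<bar> = ?k y * \<bar>R y\<bar>"
        by (simp add: abs_mult)
      also have "\<dots> \<le> ?k y * (M / 2 * (y - x)\<^sup>2)"
        unfolding R_def by (intro mult_left_mono abs_taylor2_remainder_le[OF d1 d2 curv]) simp
      finally show ?thesis
        by (simp add: ac_simps)
    qed
  qed
  also have "\<dots> = M / 2 * s\<^sup>2"
    using integral_normal_moment_even[OF \<open>0 < s\<close>, of x 1] by simp
  finally show ?thesis .
qed

lemma abs_divide_sub_one_le:
  fixes a b e L :: real
  assumes "0 < L" "L \<le> b" "\<bar>a - b\<bar> \<le> e"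
  shows "\<bar>a / b - 1\<bar> \<le> e / L"
proof -
  have "a / b - 1 = (a - b) / b"
    using assms by (simp add: field_simps)
  then have "\<bar>a / b - 1\<bar> = \<bar>a - b\<bar> / b"
    using assms by simp
  also have "\<dots> \<le> e / L"
    using assms by (intro frac_le) auto
  finally show ?thesis .
qed

lemma abs_mult_sub_one_le:
  fixes p q a b :: real
  assumes p: "\<bar>p - 1\<bar> \<le> b" and q: "\<bar>q - 1\<bar> \<le> a" and "a \<le> 1"
  shows "\<bar>p * q - 1\<bar> \<le> 2 * b + a"
proof -
  have "\<bar>(p - 1) * q\<bar> \<le> b * 2"
    unfolding abs_mult using assms by (intro mult_mono) auto
  moreover have "p * q - 1 = (p - 1) * q + (q - 1)"
    by (simp add: algebra_simps)
  ultimately show ?thesis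
    using q by linarith
qed

lemma abs_v_ratio_sub_one_le:
  fixes w w' w'' :: "real \<Rightarrow> real"
  assumes "0 < \<omega>" "0 < \<tau>" "0 < L"
    and lower: "\<And>x. L \<le> w x" and upper: "\<And>x. w x \<le> U"
    and d1: "\<And>x. (w has_real_derivative w' x) (at x)"
    and d2: "\<And>x. (w' has_real_derivative w'' x) (at x)"
    and curv: "\<And>x. \<bar>w'' x\<bar> \<le> M"
    and small: "M * \<omega>\<^sup>2 * \<tau> \<le> 2 * L"
  shows "\<bar>v_ratio \<omega> w x1 x2 \<tau> - 1\<bar> \<le> 7 * M * \<omega>\<^sup>2 * \<tau> / (2 * L)"
proof -
  define \<sigma> where "\<sigma> = \<omega> * sqrt \<tau>"
  define a where "a = M * \<sigma>\<^sup>2 / (2 * L)"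
  define S where "S = smooth_w w \<sigma>"
  have "0 < \<sigma>"
    using assms by (simp add: \<sigma>_def)
  have \<sigma>_sq: "\<sigma>\<^sup>2 = \<omega>\<^sup>2 * \<tau>"
    using \<open>0 < \<tau>\<close> by (simp add: \<sigma>_def power_mult_distrib)
  have "a \<le> 1"
    using small \<open>0 < L\<close> by (simp add: a_def \<sigma>_sq)
  have [measurable]: "w \<in> borel_measurable borel"
    using d1 by (rule borel_measurable_has_real_derivative)
  have bounded: "\<bar>w y\<bar> \<le> \<bar>L\<bar> + \<bar>U\<bar>" for y
    using lower[of y] upper[of y] by linarith
  note smoothing = abs_smooth_w_sub_le[OF _ bounded d1 d2 curv]
  have smoothing_ge: "L \<le> smooth_w w s z" if "0 < s" for s z
    using smooth_w_ge[OF that _ lower upper] by simp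
  have prefactor: "\<bar>smooth_w w (sqrt 2 * \<sigma>) x2 / S x2 - 1\<bar> \<le> 3 * a"
  proof -
    have "\<bar>smooth_w w (sqrt 2 * \<sigma>) x2 - w x2\<bar> \<le> M * \<sigma>\<^sup>2"
      using smoothing[of "sqrt 2 * \<sigma>" x2] \<open>0 < \<sigma>\<close> by (simp add: power_mult_distrib)
    moreover have "\<bar>S x2 - w x2\<bar> \<le> M / 2 * \<sigma>\<^sup>2"
      using smoothing[of \<sigma> x2] \<open>0 < \<sigma>\<close> by (simp add: S_def)
    ultimately have "\<bar>smooth_w w (sqrt 2 * \<sigma>) x2 - S x2\<bar> \<le> 3 / 2 * M * \<sigma>\<^sup>2"
      by arith
    then have "\<bar>smooth_w w (sqrt 2 * \<sigma>) x2 / S x2 - 1\<bar> \<le> 3 / 2 * M * \<sigma>\<^sup>2 / L"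
      unfolding S_def by (rule abs_divide_sub_one_le[OF \<open>0 < L\<close> smoothing_ge[OF \<open>0 < \<sigma>\<close>]])
    then show ?thesis
      by (simp add: a_def)
  qed
  have integrand: "\<bar>w z / S z - 1\<bar> \<le> a" for z
    using abs_divide_sub_one_le[OF \<open>0 < L\<close> smoothing_ge[OF \<open>0 < \<sigma>\<close>], of "w z" z "M / 2 * \<sigma>\<^sup>2"]
      smoothing[OF \<open>0 < \<sigma>\<close>, of z]
    by (simp add: S_def a_def abs_minus_commute)
  have average: "\<bar>(\<integral>z. gauss_k (\<sigma> / sqrt 2) z ((x1 + x2) / 2) * w z / S z \<partial>lborel) - 1\<bar> \<le> a"
    using abs_integral_normal_density_mult_sub_le[of "\<sigma> / sqrt 2" "\<lambda>z. w z / S z" 1 a]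
      \<open>0 < \<sigma>\<close> integrand
    by (simp add: S_def gauss_k_def)
  have "\<bar>v_ratio \<omega> w x1 x2 \<tau> - 1\<bar> \<le> 2 * (3 * a) + a"
    unfolding v_ratio_def Let_def \<sigma>_def[symmetric] S_def[symmetric]
    by (rule abs_mult_sub_one_le[OF prefactor average \<open>a \<le> 1\<close>])
  then show ?thesis
    by (simp add: a_def \<sigma>_sq ac_simps)
qed

theorem lemma2:
  fixes \<omega> L U M :: real and w w' w'' :: "real \<Rightarrow> real"
  assumes "\<omega> > 0"
    and "continuous_on UNIV w"
    and "0 < L" and "\<And>x. L \<le> w x" and "\<And>x. w x \<le> U"
    and "\<And>x. (w has_real_derivative w' x) (at x)"
    and "\<And>x. (w' has_real_derivative w'' x) (at x)"
    and "\<And>x. \<bar>w'' x\<bar> < M"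
  shows "\<exists>C > 0. \<forall>x1 x2 \<tau>. 0 < \<tau> \<and> \<tau> < 2 * L / (M * \<omega>\<^sup>2) \<longrightarrow>
           \<bar>v_ratio \<omega> w x1 x2 \<tau> - 1\<bar> \<le> C * \<tau>"
proof (intro exI[of _ "7 * M * \<omega>\<^sup>2 / (2 * L)"] conjI allI impI)
  have "0 < M"
    using assms(8)[of 0] by linarith
  then show "0 < 7 * M * \<omega>\<^sup>2 / (2 * L)"
    using assms(1,3) by simp
  fix x1 x2 \<tau> :: real
  assume \<tau>: "0 < \<tau> \<and> \<tau> < 2 * L / (M * \<omega>\<^sup>2)"
  then have "M * \<omega>\<^sup>2 * \<tau> \<le> 2 * L"
    using \<open>0 < M\<close> assms(1) by (simp add: pos_less_divide_eq mult.commute)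
  then have "\<bar>v_ratio \<omega> w x1 x2 \<tau> - 1\<bar> \<le> 7 * M * \<omega>\<^sup>2 * \<tau> / (2 * L)"
    using abs_v_ratio_sub_one_le[OF assms(1) _ assms(3-7)] assms(8) \<tau> less_imp_le by blast
  then show "\<bar>v_ratio \<omega> w x1 x2 \<tau> - 1\<bar> \<le> 7 * M * \<omega>\<^sup>2 / (2 * L) * \<tau>"
    by simp
qed

end
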